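(* Let $A\in\mathbb{R}^{d\times n}$ have first column identically zero, i.e. $A_{i,1}=0$ for all $i\in[d]$. For each integer $j\ge0$ and $k\in\{0,1,\dots,\log n\}$, let $b_{j,k}\in\mathbb{R}^d$ be column $1+2^k j$ of $A$, with $b_{j,k}$ the zero vector if $1+2^kj>n$. Then: (1) for each $i\in[d]$, $\max_{j\in[n]}A_{i,j}^2\le(\log n)\sum_{k=0}^{\log n}\sum_{j=2}^{n+1}\big((b_{j,k})_i-(b_{j-1,k})_i\big)^2$; (2) $\sum_{i=1}^d\max_{j\in[n]}A_{i,j}^2\le(\log n)\sum_{k=0}^{\log n}\sum_{j=2}^{n+1}\|b_{j,k}-b_{j-1,k}\|_2^2$.
   Context: Here $\log$ denotes the base-2 logarithm and $n$ is a power of $2$, so that $\log n$ is an integer. *)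

theory Defs
  imports Complex_Main
begin

text \<open>A d x n real matrix is represented as a function A :: nat => nat => real,
  entry (i,j) being A i j, with 1-based indices i in {1..d}, j in {1..n}.
  bcol A n j k i is the i-th entry of the vector b_{j,k}: column 1 + 2^k j of A,
  or the zero vector if 1 + 2^k j > n.\<close>

definition bcol :: "(nat \<Rightarrow> nat \<Rightarrow> real) \<Rightarrow> nat \<Rightarrow> nat \<Rightarrow> nat \<Rightarrow> nat \<Rightarrow> real" where
  "bcol A n j k i = (if 1 + 2 ^ k * j \<le> n then A i (1 + 2 ^ k * j) else 0)"

end

theory Submission
  imports Defs
begin

text \<open>Reading a row of A as a sequence v with v t the entry in column 1 + t (and 0 beyond
  column n), the value v a at 1 \<le> a \<le> 2^m is reached from v (2^m) = 0 by descending through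
  the dyadic levels: at level k an even index 2b is also the index b of level k + 1, and an odd
  index costs one difference of consecutive level-k points. So v a is a sum of at most one
  difference per level, and Cauchy-Schwarz over the m levels gives the factor m.\<close>

text \<open>Incremental form of (x_0 + ... + x_p)^2 \<le> (p + 1) (x_0^2 + ... + x_p^2).\<close>

lemma cauchy_schwarz_increment:
  fixes u D X p :: real
  assumes "u\<^sup>2 \<le> p * X" "0 \<le> X" "0 \<le> p"
  shows "(u - D)\<^sup>2 \<le> (p + 1) * (X + D\<^sup>2)"
proof (cases "p = 0")
  case True
  then show ?thesis using assms by simp
next
  case False
  then have "0 < p" using assms by simp
  have "p * (u - D)\<^sup>2 \<le> (p + 1) * (u\<^sup>2 + p * D\<^sup>2)"
    using zero_le_power2[of "u + p * D"] by (simp add: power2_eq_square algebra_simps)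
  also have "\<dots> \<le> (p + 1) * (p * X + p * D\<^sup>2)"
    using assms by (intro mult_left_mono) auto
  also have "\<dots> = p * ((p + 1) * (X + D\<^sup>2))" by (simp add: algebra_simps)
  finally show ?thesis using \<open>0 < p\<close> by simp
qed

text \<open>For v t = bcol A n t 0 i and N = n this is the level-k sum of the theorem, because
  bcol A n j k i = v (2^k j).\<close>

definition dyadic_variation :: "(nat \<Rightarrow> real) \<Rightarrow> nat \<Rightarrow> nat \<Rightarrow> real" where
  "dyadic_variation v N k = (\<Sum>j = 2..N+1. (v (2 ^ k * j) - v (2 ^ k * (j - 1)))\<^sup>2)"

lemma dyadic_variation_nonneg: "0 \<le> dyadic_variation v N k"
  unfolding dyadic_variation_def by (intro sum_nonneg) auto

lemma dyadic_variation_ge_term: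
  assumes "1 \<le> a" "a \<le> N"
  shows "(v (2 ^ k * (a + 1)) - v (2 ^ k * a))\<^sup>2 \<le> dyadic_variation v N k"
  unfolding dyadic_variation_def
  using member_le_sum[of "a + 1" "{2..N+1}" "\<lambda>j. (v (2 ^ k * j) - v (2 ^ k * (j - 1)))\<^sup>2"] assms
  by simp

lemma dyadic_chaining:
  fixes v :: "nat \<Rightarrow> real"
  assumes "1 \<le> a" "a \<le> 2 ^ r" "2 ^ (k + r) \<le> N"
  shows "(v (2 ^ k * a) - v (2 ^ (k + r)))\<^sup>2
           \<le> real r * (\<Sum>l = k..<k + r. dyadic_variation v N l)"
  using assms
proof (induction r arbitrary: k a)
  case 0
  then show ?case by simp
next
  case (Suc r)
  define b where "b = (a + 1) div 2"
  have b: "1 \<le> b" "b \<le> 2 ^ r"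
    using Suc.prems(1,2) unfolding b_def by auto
  have "2 ^ (Suc k + r) \<le> N" using Suc.prems(3) by simp
  define S where "S = (\<Sum>l = Suc k..<Suc k + r. dyadic_variation v N l)"
  have IH: "(v (2 ^ Suc k * b) - v (2 ^ (k + Suc r)))\<^sup>2 \<le> real r * S"
    using Suc.IH[OF b \<open>2 ^ (Suc k + r) \<le> N\<close>] unfolding S_def by simp
  have "\<exists>D. v (2 ^ k * a) = v (2 ^ Suc k * b) - D \<and> D\<^sup>2 \<le> dyadic_variation v N k"
  proof (cases "even a")
    case True
    then have "2 ^ k * a = 2 ^ Suc k * b" unfolding b_def by auto
    then show ?thesis using dyadic_variation_nonneg by (intro exI[of _ 0]) (simp add: mult_ac)
  next
    case False
    then have "a + 1 = 2 * b" unfolding b_def by simp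
    then have "2 ^ k * (a + 1) = 2 ^ Suc k * b" by (simp add: mult_ac)
    moreover have "a \<le> N"
      using Suc.prems(2,3) power_increasing[of "Suc r" "k + Suc r" "2::nat"] by linarith
    ultimately show ?thesis
      using dyadic_variation_ge_term[OF Suc.prems(1) \<open>a \<le> N\<close>, of v k]
      by (intro exI[of _ "v (2 ^ k * (a + 1)) - v (2 ^ k * a)"]) simp
  qed
  then obtain D where D: "v (2 ^ k * a) = v (2 ^ Suc k * b) - D"
    and D_le: "D\<^sup>2 \<le> dyadic_variation v N k" by blast
  have "(v (2 ^ k * a) - v (2 ^ (k + Suc r)))\<^sup>2 = (v (2 ^ Suc k * b) - v (2 ^ (k + Suc r)) - D)\<^sup>2"
    unfolding D by (simp add: algebra_simps)
  also have "\<dots> \<le> (real r + 1) * (S + D\<^sup>2)"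
    using cauchy_schwarz_increment[OF IH] S_def by (simp add: sum_nonneg dyadic_variation_nonneg)
  also have "\<dots> \<le> (real r + 1) * (dyadic_variation v N k + S)"
    using D_le by (intro mult_left_mono) auto
  also have "dyadic_variation v N k + S = (\<Sum>l = k..<k + Suc r. dyadic_variation v N l)"
    unfolding S_def by (simp add: sum.atLeast_Suc_lessThan)
  finally show ?case by (simp add: add.commute)
qed

lemma sq_le_dyadic_variation:
  fixes v :: "nat \<Rightarrow> real"
  assumes "v 0 = 0" "v (2 ^ m) = 0" "t \<le> 2 ^ m" "2 ^ m \<le> N"
  shows "(v t)\<^sup>2 \<le> real m * (\<Sum>l<m. dyadic_variation v N l)"
proof (cases "t = 0")
  case True
  then show ?thesis using assms(1) by (simp add: sum_nonneg dyadic_variation_nonneg)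
next
  case False
  then show ?thesis
    using dyadic_chaining[of t m 0 N v] assms(2-4) by (simp add: atLeast0LessThan)
qed

lemma bcol_eq_bcol_0: "bcol A n j k i = bcol A n (2 ^ k * j) 0 i"
  by (simp add: bcol_def)

lemma row_max_sq_le:
  fixes A :: "nat \<Rightarrow> nat \<Rightarrow> real"
  assumes "n = 2 ^ m" "A i 1 = 0"
  shows "Max ((\<lambda>j. (A i j)\<^sup>2) ` {1..n})
           \<le> real m * (\<Sum>k = 0..m. \<Sum>j = 2..n+1. (bcol A n j k i - bcol A n (j - 1) k i)\<^sup>2)"
proof -
  define v where "v t = bcol A n t 0 i" for t
  have level: "(\<Sum>j = 2..n+1. (bcol A n j k i - bcol A n (j - 1) k i)\<^sup>2) = dyadic_variation v n k"
    for k unfolding dyadic_variation_def v_def by (simp only: bcol_eq_bcol_0[of A n _ k])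
  have "(\<Sum>l<m. dyadic_variation v n l) \<le> (\<Sum>l = 0..m. dyadic_variation v n l)"
    by (intro sum_mono2) (auto simp: dyadic_variation_nonneg)
  then have bound: "real m * (\<Sum>l<m. dyadic_variation v n l)
      \<le> real m * (\<Sum>k = 0..m. \<Sum>j = 2..n+1. (bcol A n j k i - bcol A n (j - 1) k i)\<^sup>2)"
    unfolding level by (intro mult_left_mono) auto
  have "(A i j)\<^sup>2 \<le> real m * (\<Sum>l<m. dyadic_variation v n l)" if "j \<in> {1..n}" for j
  proof -
    have "A i j = v (j - 1)" using that assms(2) by (auto simp: v_def bcol_def)
    moreover have "v 0 = 0" "v (2 ^ m) = 0" using assms by (simp_all add: v_def bcol_def)
    moreover have "j - 1 \<le> 2 ^ m" using that assms(1) by auto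
    ultimately show ?thesis using sq_le_dyadic_variation[of v m "j - 1" n] assms(1) by simp
  qed
  then show ?thesis using bound assms(1) by (subst Max_le_iff) fastforce+
qed

theorem lemmaC4:
  fixes A :: "nat \<Rightarrow> nat \<Rightarrow> real" and d n m :: nat
  assumes pow: "n = 2 ^ m"
    and first_zero: "\<forall>i\<in>{1..d}. A i 1 = 0"
  shows "(\<forall>i\<in>{1..d}.
            Max ((\<lambda>j. (A i j)\<^sup>2) ` {1..n})
              \<le> real m * (\<Sum>k = 0..m. \<Sum>j = 2..n+1. (bcol A n j k i - bcol A n (j - 1) k i)\<^sup>2))
       \<and> (\<Sum>i = 1..d. Max ((\<lambda>j. (A i j)\<^sup>2) ` {1..n}))
              \<le> real m * (\<Sum>k = 0..m. \<Sum>j = 2..n+1.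
                    (\<Sum>i = 1..d. (bcol A n j k i - bcol A n (j - 1) k i)\<^sup>2))"
proof
  show rows: "\<forall>i\<in>{1..d}.
            Max ((\<lambda>j. (A i j)\<^sup>2) ` {1..n})
              \<le> real m * (\<Sum>k = 0..m. \<Sum>j = 2..n+1. (bcol A n j k i - bcol A n (j - 1) k i)\<^sup>2)"
    using row_max_sq_le[OF pow] first_zero by blast
  have "(\<Sum>i = 1..d. Max ((\<lambda>j. (A i j)\<^sup>2) ` {1..n}))
     \<le> (\<Sum>i = 1..d. real m * (\<Sum>k = 0..m. \<Sum>j = 2..n+1. (bcol A n j k i - bcol A n (j - 1) k i)\<^sup>2))"
    using rows by (intro sum_mono) auto
  also have "\<dots> = real m * (\<Sum>k = 0..m. \<Sum>j = 2..n+1.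
                    (\<Sum>i = 1..d. (bcol A n j k i - bcol A n (j - 1) k i)\<^sup>2))"
    by (simp only: sum_distrib_left[symmetric] sum.swap[of _ "{0..m}" "{1..d}"]
        sum.swap[of _ "{2..n+1}" "{1..d}"])
  finally show "(\<Sum>i = 1..d. Max ((\<lambda>j. (A i j)\<^sup>2) ` {1..n}))
              \<le> real m * (\<Sum>k = 0..m. \<Sum>j = 2..n+1.
                    (\<Sum>i = 1..d. (bcol A n j k i - bcol A n (j - 1) k i)\<^sup>2))" .
qed

end
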